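(* $\mathcal{A}(\bm{p})$ is a coherent ring: every finitely generated ideal $I$ of $\mathcal{A}(\bm{p})$ is finitely presented, i.e. there is an exact sequence of $\mathcal{A}(\bm{p})$-modules $0\to K\to F\to I\to0$ with $F$ finitely generated free and $K$ finitely generated.
   Context: Fix $\bm{p}:\mathbb{N}_0\to(0,\infty)$ with $\lim_{n\to\infty}\bm{p}(n)^{1/n}=\infty$. For an entire function $f$ write $f(z)=\sum_{n\ge0}\widehat f(n)z^n$. $\mathcal{A}(\bm{p})$ is the set of entire functions $f$ with $\sup_{n\ge 0}\bm{p}(n)|\widehat f(n)|<\infty$, with pointwise addition and scalar multiplication and the weighted Hadamard product $(f\ast g)(z)=\sum_{n\ge0}\bm{p}(n)\widehat f(n)\widehat g(n)z^n$; it is a commutative unital ring with unit $\varepsilon(z)=\sum_{n\ge0}\frac{z^n}{\bm{p}(n)}$. *)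

theory Defs
  imports "HOL-Complex_Analysis.Complex_Analysis" "HOL-Library.Function_Algebras"
begin

definition tcoeff :: "(complex \<Rightarrow> complex) \<Rightarrow> nat \<Rightarrow> complex" where
  "tcoeff f n = (deriv ^^ n) f 0 / of_nat (fact n)"

definition Ap :: "(nat \<Rightarrow> real) \<Rightarrow> (complex \<Rightarrow> complex) set" where
  "Ap p = {f. f holomorphic_on UNIV \<and> bdd_above (range (\<lambda>n. p n * norm (tcoeff f n)))}"

definition Amult :: "(nat \<Rightarrow> real) \<Rightarrow> (complex \<Rightarrow> complex) \<Rightarrow> (complex \<Rightarrow> complex) \<Rightarrow> (complex \<Rightarrow> complex)" where
  "Amult p f g = (\<lambda>z. \<Sum>n. of_real (p n) * tcoeff f n * tcoeff g n * z ^ n)"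

definition Ap_ideal :: "(nat \<Rightarrow> real) \<Rightarrow> (complex \<Rightarrow> complex) set \<Rightarrow> bool" where
  "Ap_ideal p I \<longleftrightarrow> I \<subseteq> Ap p \<and> 0 \<in> I \<and> (\<forall>f\<in>I. \<forall>g\<in>I. f + g \<in> I) \<and> (\<forall>f\<in>I. - f \<in> I)
     \<and> (\<forall>r\<in>Ap p. \<forall>f\<in>I. Amult p r f \<in> I)"

definition lincomb :: "(nat \<Rightarrow> real) \<Rightarrow> (complex \<Rightarrow> complex) list \<Rightarrow> (complex \<Rightarrow> complex) list \<Rightarrow> (complex \<Rightarrow> complex)" where
  "lincomb p rs gs = (\<Sum>i<length gs. Amult p (rs ! i) (gs ! i))"

definition Ap_span :: "(nat \<Rightarrow> real) \<Rightarrow> (complex \<Rightarrow> complex) list \<Rightarrow> (complex \<Rightarrow> complex) set" where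
  "Ap_span p gs = {lincomb p rs gs | rs. length rs = length gs \<and> set rs \<subseteq> Ap p}"

definition fg_ideal :: "(nat \<Rightarrow> real) \<Rightarrow> (complex \<Rightarrow> complex) set \<Rightarrow> bool" where
  "fg_ideal p I \<longleftrightarrow> Ap_ideal p I \<and> (\<exists>gs. set gs \<subseteq> Ap p \<and> I = Ap_span p gs)"

text \<open>Kernel K of the surjection A(p)^n \<rightarrow> I, e_i \<mapsto> gs!i (tuples as lists of length n).\<close>
definition syz :: "(nat \<Rightarrow> real) \<Rightarrow> (complex \<Rightarrow> complex) list \<Rightarrow> (complex \<Rightarrow> complex) list set" where
  "syz p gs = {rs. length rs = length gs \<and> set rs \<subseteq> Ap p \<and> lincomb p rs gs = 0}"

definition tspan :: "(nat \<Rightarrow> real) \<Rightarrow> nat \<Rightarrow> (complex \<Rightarrow> complex) list list \<Rightarrow> (complex \<Rightarrow> complex) list set" where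
  "tspan p n ks = {v. length v = n \<and> (\<exists>cs. length cs = length ks \<and> set cs \<subseteq> Ap p \<and>
      (\<forall>i<n. v ! i = (\<Sum>j<length ks. Amult p (cs ! j) (ks ! j ! i))))}"

text \<open>Finitely presented: exact 0 \<rightarrow> K \<rightarrow> A(p)^n \<rightarrow> I \<rightarrow> 0 with K finitely generated.\<close>
definition fin_presented :: "(nat \<Rightarrow> real) \<Rightarrow> (complex \<Rightarrow> complex) set \<Rightarrow> bool" where
  "fin_presented p I \<longleftrightarrow> (\<exists>gs. set gs \<subseteq> Ap p \<and> I = Ap_span p gs \<and>
      (\<exists>ks. syz p gs = tspan p (length gs) ks))"

end

theory Submission imports Defs begin

text \<open>
  The weighted coefficient map \<open>f \<mapsto> (p n * tcoeff f n)\<^sub>n\<close> is a ring isomorphism from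
  A(p) onto the bounded complex sequences with pointwise operations; surjectivity holds because
  \<open>p\<close> eventually dominates every geometric sequence, so \<open>\<Sum> c\<^sub>n / p\<^sub>n z\<^sup>n\<close> is entire for every
  bounded \<open>c\<close>. In that sequence ring, syzygies are computed index by index: if \<open>s\<close> picks at each
  index an entry \<open>a\<^sub>s\<close> of largest modulus, the syzygies \<open>e\<^sub>j - (a\<^sub>j / a\<^sub>s) e\<^sub>s\<close> have entries bounded
  by 2 and generate every syzygy \<open>r\<close>, namely \<open>r = \<Sum>\<^sub>j r\<^sub>j (e\<^sub>j - (a\<^sub>j / a\<^sub>s) e\<^sub>s)\<close>.
\<close>

lemma sum_fun_apply: "(\<Sum>i\<in>A. f i) x = (\<Sum>i\<in>A. f i x)"
  by (induction A rule: infinite_finite_induct) auto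

lemma Bseq_plus:
  fixes f g :: "nat \<Rightarrow> 'a::real_normed_vector"
  assumes "Bseq f" "Bseq g"
  shows "Bseq (\<lambda>n. f n + g n)"
proof -
  obtain K L where "\<And>n. norm (f n) \<le> K" "\<And>n. norm (g n) \<le> L"
    using assms by (auto simp: Bseq_def)
  then show ?thesis by (intro BseqI'[of _ "K + L"] norm_triangle_mono)
qed

lemma Bseq_sum:
  fixes f :: "'b \<Rightarrow> nat \<Rightarrow> 'a::real_normed_vector"
  shows "(\<And>i. i \<in> A \<Longrightarrow> Bseq (f i)) \<Longrightarrow> Bseq (\<lambda>n. \<Sum>i\<in>A. f i n)"
  by (induction A rule: infinite_finite_induct) (auto intro: Bseq_plus)

lemma ex_max_norm_index:
  fixes a :: "nat \<Rightarrow> 'a::real_normed_vector"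
  assumes "0 < m"
  shows "\<exists>i<m. \<forall>k<m. norm (a k) \<le> norm (a i)"
proof -
  let ?S = "(\<lambda>k. norm (a k)) ` {..<m}"
  have "Max ?S \<in> ?S" using assms by (intro Max_in) auto
  then obtain i where "i < m" "norm (a i) = Max ?S" by auto
  then show ?thesis by (auto intro!: exI[of _ i])
qed

subsection \<open>Syzygies of a single vector\<close>

definition syz_gen :: "(nat \<Rightarrow> 'a::field) \<Rightarrow> nat \<Rightarrow> nat \<Rightarrow> nat \<Rightarrow> 'a" where
  "syz_gen a s j k = (if k = j then 1 else 0) - (if k = s then a j / a s else 0)"

lemma syz_gen_annihilates:
  assumes "j < m" "s < m" "a s = 0 \<Longrightarrow> a j = 0"
  shows "(\<Sum>k<m. syz_gen a s j k * a k) = 0"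
proof -
  have "(\<Sum>k<m. syz_gen a s j k * a k)
      = (\<Sum>k<m. (if k = j then a k else 0) - (if k = s then a j / a s * a k else 0))"
    by (intro sum.cong) (auto simp: syz_gen_def)
  also have "\<dots> = a j - a j / a s * a s"
    using assms(1,2) by (simp add: sum_subtractf)
  also have "\<dots> = 0"
    using assms(3) by (cases "a s = 0") auto
  finally show ?thesis .
qed

lemma syz_gen_combination:
  assumes "i < m" "(\<Sum>k<m. r k * a k) = 0"
  shows "(\<Sum>j<m. r j * syz_gen a s j i) = r i"
proof (cases "i = s")
  case True
  have "(\<Sum>j<m. r j * syz_gen a s j s) = (\<Sum>j<m. (if j = s then r j else 0) - r j * a j / a s)"
    by (intro sum.cong) (auto simp: syz_gen_def right_diff_distrib)
  also have "\<dots> = r s - (\<Sum>j<m. r j * a j) / a s"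
    using assms(1) True by (simp add: sum_subtractf sum_divide_distrib)
  finally show ?thesis
    using True assms(2) by simp
next
  case False
  then have "(\<Sum>j<m. r j * syz_gen a s j i) = (\<Sum>j<m. if j = i then r j else 0)"
    by (intro sum.cong) (auto simp: syz_gen_def)
  then show ?thesis
    using assms(1) by simp
qed

lemma norm_syz_gen_le:
  fixes a :: "nat \<Rightarrow> 'a::real_normed_field"
  assumes "norm (a j) \<le> norm (a s)"
  shows "norm (syz_gen a s j k) \<le> 2"
proof -
  have "norm (a j / a s) \<le> 1"
    using assms by (cases "a s = 0") (auto simp: norm_divide divide_le_eq_1)
  then have "norm (syz_gen a s j k) \<le> 1 + 1"
    unfolding syz_gen_def by (intro order.trans[OF norm_triangle_ineq4] add_mono) auto
  then show ?thesis by simp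
qed

subsection \<open>A(p) as the ring of bounded sequences\<close>

definition Ap_seq :: "(nat \<Rightarrow> real) \<Rightarrow> (complex \<Rightarrow> complex) \<Rightarrow> nat \<Rightarrow> complex" where
  "Ap_seq p f n = of_real (p n) * tcoeff f n"

definition Ap_of_seq :: "(nat \<Rightarrow> real) \<Rightarrow> (nat \<Rightarrow> complex) \<Rightarrow> complex \<Rightarrow> complex" where
  "Ap_of_seq p c = eval_fps (Abs_fps (\<lambda>n. c n / of_real (p n)))"

definition seq_matrix ::
    "(nat \<Rightarrow> real) \<Rightarrow> nat \<Rightarrow> (nat \<Rightarrow> nat \<Rightarrow> nat \<Rightarrow> complex) \<Rightarrow> (complex \<Rightarrow> complex) list list" where
  "seq_matrix p m W = map (\<lambda>j. map (\<lambda>k. Ap_of_seq p (W j k)) [0..<m]) [0..<m]"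

lemma length_seq_matrix [simp]: "length (seq_matrix p m W) = m"
  by (simp add: seq_matrix_def)

lemma seq_matrix_nth: "j < m \<Longrightarrow> k < m \<Longrightarrow> seq_matrix p m W ! j ! k = Ap_of_seq p (W j k)"
  by (simp add: seq_matrix_def)

lemma Ap_of_seq_apply: "Ap_of_seq p c z = (\<Sum>n. c n / of_real (p n) * z ^ n)"
  by (simp add: Ap_of_seq_def eval_fps_def)

lemma Ap_of_seq_zero: "Ap_of_seq p (\<lambda>n. 0) = 0"
  by (simp add: Ap_of_seq_apply fun_eq_iff)

context
  fixes p :: "nat \<Rightarrow> real"
  assumes p_pos: "\<And>n. p n > 0"
    and root_p_unbounded: "filterlim (\<lambda>n. root n (p n)) at_top sequentially"
begin

lemma eventually_power_le_p:
  assumes "0 \<le> r"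
  shows "eventually (\<lambda>n. r ^ n \<le> p n) sequentially"
  using root_p_unbounded[unfolded filterlim_at_top, rule_format, of r] eventually_gt_at_top[of 0]
proof eventually_elim
  case (elim n)
  then have "r ^ n \<le> root n (p n) ^ n"
    using assms by (intro power_mono) auto
  also have "\<dots> = p n"
    using elim p_pos[of n] by (simp add: real_root_pow_pos)
  finally show ?case .
qed

lemma summable_weighted_power_series:
  fixes c :: "nat \<Rightarrow> complex"
  assumes "Bseq c"
  shows "summable (\<lambda>n. norm (c n / of_real (p n) * z ^ n))"
proof -
  obtain K where K: "K > 0" "\<And>n. norm (c n) \<le> K"
    using assms by (auto simp: Bseq_def)
  have "eventually (\<lambda>n. norm (norm (c n / of_real (p n) * z ^ n)) \<le> K * (1/2) ^ n) sequentially"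
  proof (rule eventually_mono)
    show "eventually (\<lambda>n. (2 * norm z) ^ n \<le> p n) sequentially"
      by (rule eventually_power_le_p) simp
  next
    fix n assume "(2 * norm z) ^ n \<le> p n"
    then have geometric: "norm z ^ n \<le> p n * (1/2) ^ n"
      by (simp add: power_mult_distrib power_one_over le_divide_eq mult.commute)
    have "norm (norm (c n / of_real (p n) * z ^ n)) = norm (c n) * (norm z ^ n / p n)"
      using p_pos[of n] by (simp add: norm_mult norm_divide norm_power)
    also have "\<dots> \<le> K * (1/2) ^ n"
      using K geometric p_pos[of n] by (intro mult_mono) (auto simp: divide_le_eq mult.commute)
    finally show "norm (norm (c n / of_real (p n) * z ^ n)) \<le> K * (1/2) ^ n" .
  qed
  moreover have "summable (\<lambda>n. K * (1/2::real) ^ n)"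
    by (intro summable_mult summable_geometric) auto
  ultimately show ?thesis
    by (rule summable_comparison_test_ev)
qed

lemma fps_conv_radius_Ap_of_seq:
  fixes c :: "nat \<Rightarrow> complex"
  shows "Bseq c \<Longrightarrow> fps_conv_radius (Abs_fps (\<lambda>n. c n / of_real (p n))) = \<infinity>"
  unfolding fps_conv_radius_def fps_nth_Abs_fps
  by (rule conv_radius_inftyI'', rule summable_norm_cancel, rule summable_weighted_power_series)

lemma holomorphic_Ap_of_seq: "Bseq c \<Longrightarrow> Ap_of_seq p c holomorphic_on UNIV"
  unfolding Ap_of_seq_def by (intro holomorphic_on_eval_fps) (simp add: fps_conv_radius_Ap_of_seq)

lemma tcoeff_Ap_of_seq:
  assumes "Bseq c"
  shows "tcoeff (Ap_of_seq p c) n = c n / of_real (p n)"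
proof -
  have "fps_nth (Abs_fps (\<lambda>n. c n / of_real (p n))) n = (deriv ^^ n) (Ap_of_seq p c) 0 / fact n"
    unfolding Ap_of_seq_def using assms by (intro fps_nth_conv_deriv) (simp add: fps_conv_radius_Ap_of_seq)
  then show ?thesis by (simp add: tcoeff_def)
qed

lemma Ap_seq_Ap_of_seq:
  assumes "Bseq c"
  shows "Ap_seq p (Ap_of_seq p c) = c"
proof
  fix n
  have "of_real (p n) \<noteq> (0::complex)"
    using p_pos[of n] by simp
  then show "Ap_seq p (Ap_of_seq p c) n = c n"
    by (simp add: Ap_seq_def tcoeff_Ap_of_seq assms)
qed

lemma Ap_of_seq_in_Ap:
  assumes "Bseq c"
  shows "Ap_of_seq p c \<in> Ap p"
proof -
  obtain K where "\<And>n. norm (c n) \<le> K"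
    using assms by (auto simp: Bseq_def)
  moreover have "p n * norm (tcoeff (Ap_of_seq p c) n) = norm (c n)" for n
    using p_pos[of n] assms by (simp add: tcoeff_Ap_of_seq norm_divide)
  ultimately show ?thesis
    using holomorphic_Ap_of_seq[OF assms] by (auto simp: Ap_def bdd_above_def)
qed

lemma Bseq_Ap_seq:
  assumes "f \<in> Ap p"
  shows "Bseq (Ap_seq p f)"
proof -
  obtain K where "\<And>n. p n * norm (tcoeff f n) \<le> K"
    using assms by (auto simp: Ap_def bdd_above_def)
  then show ?thesis
    using p_pos by (intro BseqI'[of _ K]) (simp add: Ap_seq_def norm_mult less_imp_le)
qed

lemma Ap_of_seq_Ap_seq:
  assumes "f \<in> Ap p"
  shows "Ap_of_seq p (Ap_seq p f) = f"
proof
  fix z :: complex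
  have "f holomorphic_on ball 0 (norm z + 1)"
    using assms holomorphic_on_subset[of f UNIV] by (simp add: Ap_def)
  then have "(\<lambda>n. tcoeff f n * z ^ n) sums f z"
    using holomorphic_power_series[of f 0 "norm z + 1" z] by (simp add: tcoeff_def)
  moreover have "Ap_seq p f n / of_real (p n) = tcoeff f n" for n
    using p_pos[of n] by (simp add: Ap_seq_def)
  ultimately show "Ap_of_seq p (Ap_seq p f) z = f z"
    by (simp add: Ap_of_seq_apply sums_iff)
qed

lemma Amult_eq_Ap_of_seq: "Amult p f g = Ap_of_seq p (\<lambda>n. Ap_seq p f n * Ap_seq p g n)"
proof -
  have "of_real (p n) * tcoeff f n * tcoeff g n * z ^ n
      = Ap_seq p f n * Ap_seq p g n / of_real (p n) * z ^ n" for n and z :: complex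
  proof -
    have "of_real (p n) \<noteq> (0::complex)"
      using p_pos[of n] by simp
    then show ?thesis
      by (simp add: Ap_seq_def)
  qed
  then show ?thesis
    by (simp add: fun_eq_iff Amult_def Ap_of_seq_apply)
qed

lemma sum_Ap_of_seq:
  assumes "\<And>i. i \<in> A \<Longrightarrow> Bseq (c i)"
  shows "(\<Sum>i\<in>A. Ap_of_seq p (c i)) = Ap_of_seq p (\<lambda>n. \<Sum>i\<in>A. c i n)"
proof
  fix z
  have "(\<Sum>i\<in>A. Ap_of_seq p (c i)) z = (\<Sum>i\<in>A. \<Sum>n. c i n / of_real (p n) * z ^ n)"
    by (simp add: sum_fun_apply Ap_of_seq_apply)
  also have "\<dots> = (\<Sum>n. \<Sum>i\<in>A. c i n / of_real (p n) * z ^ n)"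
    using assms by (intro suminf_sum[symmetric]) (rule summable_norm_cancel, rule summable_weighted_power_series)
  also have "\<dots> = Ap_of_seq p (\<lambda>n. \<Sum>i\<in>A. c i n) z"
    by (simp add: Ap_of_seq_apply sum_divide_distrib sum_distrib_right)
  finally show "(\<Sum>i\<in>A. Ap_of_seq p (c i)) z = Ap_of_seq p (\<lambda>n. \<Sum>i\<in>A. c i n) z" .
qed

lemma Ap_of_seq_eq_0_iff:
  assumes "Bseq c"
  shows "Ap_of_seq p c = 0 \<longleftrightarrow> c = (\<lambda>n. 0)"
proof
  assume "Ap_of_seq p c = 0"
  then have "Ap_seq p (Ap_of_seq p c) = Ap_seq p (Ap_of_seq p (\<lambda>n. 0))"
    by (simp only: Ap_of_seq_zero)
  then show "c = (\<lambda>n. 0)"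
    by (simp only: Ap_seq_Ap_of_seq assms Bfun_const)
qed (simp add: Ap_of_seq_zero)

lemma sum_Amult_Ap_of_seq:
  assumes "\<And>j. j \<in> A \<Longrightarrow> Bseq (r j)" "\<And>j. j \<in> A \<Longrightarrow> Bseq (c j)"
  shows "(\<Sum>j\<in>A. Amult p (Ap_of_seq p (r j)) (Ap_of_seq p (c j)))
    = Ap_of_seq p (\<lambda>n. \<Sum>j\<in>A. r j n * c j n)"
  using assms
  by (simp add: Amult_eq_Ap_of_seq Ap_seq_Ap_of_seq Bseq_mult sum_Ap_of_seq cong: sum.cong)

lemma lincomb_eq_Ap_of_seq:
  assumes "length rs = length gs" "set rs \<subseteq> Ap p" "set gs \<subseteq> Ap p"
  shows "lincomb p rs gs = Ap_of_seq p (\<lambda>n. \<Sum>k<length gs. Ap_seq p (rs ! k) n * Ap_seq p (gs ! k) n)"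
proof -
  have mem: "rs ! k \<in> Ap p" "gs ! k \<in> Ap p" if "k < length gs" for k
    using assms that by (metis nth_mem subsetD)+
  have "lincomb p rs gs
      = (\<Sum>k<length gs. Amult p (Ap_of_seq p (Ap_seq p (rs ! k))) (Ap_of_seq p (Ap_seq p (gs ! k))))"
    unfolding lincomb_def by (intro sum.cong) (simp_all add: mem Ap_of_seq_Ap_seq)
  also have "\<dots> = Ap_of_seq p (\<lambda>n. \<Sum>k<length gs. Ap_seq p (rs ! k) n * Ap_seq p (gs ! k) n)"
    by (intro sum_Amult_Ap_of_seq) (simp_all add: mem Bseq_Ap_seq)
  finally show ?thesis .
qed

lemma syz_iff_pointwise:
  assumes "set gs \<subseteq> Ap p"
  shows "v \<in> syz p gs \<longleftrightarrow> length v = length gs \<and> set v \<subseteq> Ap p \<and>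
    (\<forall>n. (\<Sum>k<length gs. Ap_seq p (v ! k) n * Ap_seq p (gs ! k) n) = 0)"
proof -
  let ?S = "\<lambda>n. \<Sum>k<length gs. Ap_seq p (v ! k) n * Ap_seq p (gs ! k) n"
  have "lincomb p v gs = 0 \<longleftrightarrow> (\<forall>n. ?S n = 0)"
    if "length v = length gs" "set v \<subseteq> Ap p"
  proof -
    have "Bseq ?S"
      using assms that by (intro Bseq_sum Bseq_mult Bseq_Ap_seq) (auto dest: nth_mem)
    then have "lincomb p v gs = 0 \<longleftrightarrow> ?S = (\<lambda>n. 0)"
      using assms that by (simp add: lincomb_eq_Ap_of_seq Ap_of_seq_eq_0_iff)
    then show ?thesis
      by (simp add: fun_eq_iff)
  qed
  then show ?thesis
    by (auto simp: syz_def)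
qed

lemma tspan_seq_matrix_iff:
  assumes W: "\<And>j k. j < m \<Longrightarrow> Bseq (W j k)"
  shows "v \<in> tspan p m (seq_matrix p m W) \<longleftrightarrow> length v = m \<and>
    (\<exists>r. (\<forall>j<m. Bseq (r j)) \<and> (\<forall>i<m. v ! i = Ap_of_seq p (\<lambda>n. \<Sum>j<m. r j n * W j i n)))"
    (is "_ \<longleftrightarrow> _ \<and> ?comb")
proof -
  have span_eq: "(\<Sum>j<m. Amult p (Ap_of_seq p (r j)) (seq_matrix p m W ! j ! i))
      = Ap_of_seq p (\<lambda>n. \<Sum>j<m. r j n * W j i n)"
    if "\<forall>j<m. Bseq (r j)" "i < m" for r i
    using that W by (simp add: seq_matrix_nth, intro sum_Amult_Ap_of_seq) auto
  have "?comb" if "length cs = m" "set cs \<subseteq> Ap p"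
    "\<forall>i<m. v ! i = (\<Sum>j<m. Amult p (cs ! j) (seq_matrix p m W ! j ! i))" for cs
  proof -
    have cs: "cs ! j \<in> Ap p" if "j < m" for j
      using \<open>length cs = m\<close> \<open>set cs \<subseteq> Ap p\<close> that by (metis nth_mem subsetD)
    show ?thesis
      using that(3) span_eq[of "\<lambda>j. Ap_seq p (cs ! j)"]
      by (intro exI[of _ "\<lambda>j. Ap_seq p (cs ! j)"]) (simp add: cs Bseq_Ap_seq Ap_of_seq_Ap_seq)
  qed
  moreover have "\<exists>cs. length cs = m \<and> set cs \<subseteq> Ap p \<and>
      (\<forall>i<m. v ! i = (\<Sum>j<m. Amult p (cs ! j) (seq_matrix p m W ! j ! i)))"
    if "\<forall>j<m. Bseq (r j)" "\<forall>i<m. v ! i = Ap_of_seq p (\<lambda>n. \<Sum>j<m. r j n * W j i n)" for r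
    using that span_eq[OF that(1)]
    by (intro exI[of _ "map (\<lambda>j. Ap_of_seq p (r j)) [0..<m]"]) (auto simp: Ap_of_seq_in_Ap)
  ultimately show ?thesis
    by (auto simp: tspan_def)
qed

lemma syz_eq_tspan_syz_gen:
  fixes gs :: "(complex \<Rightarrow> complex) list" and s :: "nat \<Rightarrow> nat"
  defines "m \<equiv> length gs" and "a \<equiv> \<lambda>n k. Ap_seq p (gs ! k) n"
  assumes gs: "set gs \<subseteq> Ap p"
    and s_less: "\<And>n. s n < m" and s_max: "\<And>n k. k < m \<Longrightarrow> norm (a n k) \<le> norm (a n (s n))"
  shows "syz p gs = tspan p m (seq_matrix p m (\<lambda>j k n. syz_gen (a n) (s n) j k))"
proof -
  let ?W = "\<lambda>j k n. syz_gen (a n) (s n) j k"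
  have W_bounded: "Bseq (?W j k)" if "j < m" for j k
  proof (rule BseqI')
    show "norm (?W j k n) \<le> 2" for n
      by (rule norm_syz_gen_le) (rule s_max[OF that])
  qed
  have W_annihilates: "(\<Sum>k<m. ?W j k n * a n k) = 0" if "j < m" for j n
    using s_max[OF that, of n] by (intro syz_gen_annihilates that s_less) auto
  note tspan_iff = tspan_seq_matrix_iff[OF W_bounded]
  note syz_iff = syz_iff_pointwise[OF gs, folded m_def]
  show ?thesis
  proof (intro set_eqI iffI)
    fix v assume "v \<in> syz p gs"
    then have v: "length v = m" "set v \<subseteq> Ap p" "\<And>n. (\<Sum>k<m. Ap_seq p (v ! k) n * a n k) = 0"
      by (simp_all add: syz_iff a_def)
    have v_mem: "v ! i \<in> Ap p" if "i < m" for i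
      using v(1,2) that by (metis nth_mem subsetD)
    have "v ! i = Ap_of_seq p (\<lambda>n. \<Sum>j<m. Ap_seq p (v ! j) n * ?W j i n)" if "i < m" for i
      using syz_gen_combination[OF that v(3)] by (simp add: Ap_of_seq_Ap_seq v_mem that)
    then have "\<exists>r. (\<forall>j<m. Bseq (r j)) \<and> (\<forall>i<m. v ! i = Ap_of_seq p (\<lambda>n. \<Sum>j<m. r j n * ?W j i n))"
      using v_mem by (intro exI[of _ "\<lambda>j. Ap_seq p (v ! j)"]) (simp add: Bseq_Ap_seq)
    then show "v \<in> tspan p m (seq_matrix p m ?W)"
      using v(1) by (simp add: tspan_iff)
  next
    fix v assume "v \<in> tspan p m (seq_matrix p m ?W)"
    then have "length v = m \<and> (\<exists>r. (\<forall>j<m. Bseq (r j)) \<and>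
        (\<forall>i<m. v ! i = Ap_of_seq p (\<lambda>n. \<Sum>j<m. r j n * ?W j i n)))"
      by (simp add: tspan_iff)
    then obtain r where v: "length v = m" "\<And>j. j < m \<Longrightarrow> Bseq (r j)"
      and v_eq: "\<And>i. i < m \<Longrightarrow> v ! i = Ap_of_seq p (\<lambda>n. \<Sum>j<m. r j n * ?W j i n)"
      by blast
    define t where "t i = (\<lambda>n. \<Sum>j<m. r j n * ?W j i n)" for i
    have t_bounded: "Bseq (t i)" for i
      unfolding t_def using v(2) W_bounded by (intro Bseq_sum Bseq_mult) auto
    have v_t: "v ! i = Ap_of_seq p (t i)" if "i < m" for i
      using v_eq[OF that] by (simp add: t_def)
    have "set v \<subseteq> Ap p"
      using v(1) v_t Ap_of_seq_in_Ap[OF t_bounded] by (auto simp: in_set_conv_nth)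
    moreover have "(\<Sum>k<m. Ap_seq p (v ! k) n * a n k) = 0" for n
    proof -
      have "(\<Sum>k<m. Ap_seq p (v ! k) n * a n k) = (\<Sum>k<m. \<Sum>j<m. r j n * (?W j k n * a n k))"
        by (simp add: v_t Ap_seq_Ap_of_seq t_bounded) (simp add: t_def sum_distrib_right mult.assoc)
      also have "\<dots> = (\<Sum>j<m. r j n * (\<Sum>k<m. ?W j k n * a n k))"
        by (subst sum.swap) (simp add: sum_distrib_left)
      also have "\<dots> = 0"
        by (simp add: W_annihilates)
      finally show ?thesis .
    qed
    ultimately show "v \<in> syz p gs"
      using v(1) by (simp add: syz_iff a_def)
  qed
qed

lemma syz_finitely_generated:
  assumes "set gs \<subseteq> Ap p"
  shows "\<exists>ks. syz p gs = tspan p (length gs) ks"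
proof (cases "gs = []")
  case True
  then show ?thesis
    by (intro exI[of _ "[]"]) (auto simp: syz_def tspan_def lincomb_def)
next
  case False
  then have "\<forall>n. \<exists>i<length gs. \<forall>k<length gs. norm (Ap_seq p (gs ! k) n) \<le> norm (Ap_seq p (gs ! i) n)"
    by (intro allI ex_max_norm_index) simp
  then obtain s where "\<And>n. s n < length gs"
    "\<And>n k. k < length gs \<Longrightarrow> norm (Ap_seq p (gs ! k) n) \<le> norm (Ap_seq p (gs ! s n) n)"
    by metis
  then show ?thesis
    using syz_eq_tspan_syz_gen[OF assms] by blast
qed

end

theorem mainTheorem15:
  fixes p :: "nat \<Rightarrow> real"
  assumes "\<And>n. p n > 0"
    and "filterlim (\<lambda>n. root n (p n)) at_top sequentially"
  shows "\<forall>I. fg_ideal p I \<longrightarrow> fin_presented p I"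
proof (intro allI impI)
  fix I assume "fg_ideal p I"
  then obtain gs where "set gs \<subseteq> Ap p" "I = Ap_span p gs"
    unfolding fg_ideal_def by blast
  then show "fin_presented p I"
    unfolding fin_presented_def using syz_finitely_generated[OF assms] by blast
qed

end
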